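(* Consider an $\mathbb{H}_{2n+1}$-structure on $\mathbb{P}V$ such that $T$ fixes every point of the boundary hyperplane $\mathbb{P}V'$. Let $v$ be the point $\overline{\mathbb{I}\cdot o}\setminus\mathbb{I}\cdot o$ for $o$ in the open orbit, $\hat v\in V$ a nonzero representative, and $\widetilde V=V/\mathbb{C}\hat v$. Then $\mathbb{I}$ (which fixes $v$) acts trivially on $\mathbb{P}\widetilde V$.
   Context: Work over $\mathbb{C}$, $n\ge1$. The Heisenberg group $\mathbb{H}_{2n+1}$ is $\mathbb{W}\times\mathbb{C}$ ($\mathbb{W}$ a $2n$-dimensional space with non-degenerate skew form $\omega$) with law $(w_1,t_1)(w_2,t_2)=(w_1+w_2,t_1+t_2+\tfrac12\omega(w_1,w_2))$; $T=(0,1)$, $\mathbb{I}=\mathbb{C}T$ its center. $V\cong\mathbb{C}^{2n+2}$. An $\mathbb{H}_{2n+1}$-structure on $\mathbb{P}V$ is an effective algebraic action with a dense open orbit, whose boundary (complement of the open orbit) is a hyperplane $\mathbb{P}V'$. The point $v$ lies on the boundary and does not depend on the choice of $o$; projective transformations fixing $v$ preserve the line $\mathbb{C}\hat v$ and so induce projective transformations of $\mathbb{P}\widetilde V$. *)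

theory Defs
  imports "HOL-Analysis.Analysis"
begin

definition heis_mul ::
  "(complex^'k::finite \<Rightarrow> complex^'k \<Rightarrow> complex) \<Rightarrow>
   ((complex^'k) \<times> complex) \<Rightarrow> ((complex^'k) \<times> complex) \<Rightarrow> ((complex^'k) \<times> complex)"
  where "heis_mul \<omega> g h = (fst g + fst h, snd g + snd h + (1/2) * \<omega> (fst g) (fst h))"

definition symplectic_form :: "(complex^'k::finite \<Rightarrow> complex^'k \<Rightarrow> complex) \<Rightarrow> bool" where
  "symplectic_form \<omega> \<longleftrightarrow>
     (\<forall>x y z. \<omega> (x + y) z = \<omega> x z + \<omega> y z) \<and>
     (\<forall>c x z. \<omega> (c *s x) z = c * \<omega> x z) \<and>
     (\<forall>x y. \<omega> x y = - \<omega> y x) \<and>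
     (\<forall>x. (\<forall>y. \<omega> x y = 0) \<longrightarrow> x = 0)"

inductive poly_fun :: "(((complex^'k::finite) \<times> complex) \<Rightarrow> complex) \<Rightarrow> bool" where
  const: "poly_fun (\<lambda>g. c)"
| coord_w: "poly_fun (\<lambda>g. fst g $ i)"
| coord_t: "poly_fun (\<lambda>g. snd g)"
| add: "poly_fun f \<Longrightarrow> poly_fun h \<Longrightarrow> poly_fun (\<lambda>g. f g + h g)"
| mult: "poly_fun f \<Longrightarrow> poly_fun h \<Longrightarrow> poly_fun (\<lambda>g. f g * h g)"

text \<open>Algebraic projective representation of the Heisenberg group on P V,
  given by a (lifted) morphic homomorphism into GL(V).\<close>
definition algebraic_rep ::
  "(complex^'k::finite \<Rightarrow> complex^'k \<Rightarrow> complex) \<Rightarrow>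
   ((complex^'k) \<times> complex \<Rightarrow> complex^'m::finite^'m) \<Rightarrow> bool" where
  "algebraic_rep \<omega> \<rho> \<longleftrightarrow>
     \<rho> (0, 0) = mat 1 \<and>
     (\<forall>g h. \<rho> (heis_mul \<omega> g h) = \<rho> g ** \<rho> h) \<and>
     (\<forall>i j. poly_fun (\<lambda>g. \<rho> g $ i $ j))"

definition fixes_point :: "complex^'m::finite^'m \<Rightarrow> complex^'m \<Rightarrow> bool" where
  "fixes_point A x \<longleftrightarrow> (\<exists>c. A *v x = c *s x)"

definition effective_proj ::
  "((complex^'k::finite) \<times> complex \<Rightarrow> complex^'m::finite^'m) \<Rightarrow> bool" where
  "effective_proj \<rho> \<longleftrightarrow> (\<forall>g. (\<forall>x. fixes_point (\<rho> g) x) \<longrightarrow> g = (0, 0))"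

definition proj_orbit ::
  "((complex^'k::finite) \<times> complex \<Rightarrow> complex^'m::finite^'m) \<Rightarrow> complex^'m \<Rightarrow> complex^'m \<Rightarrow> bool" where
  "proj_orbit \<rho> p x \<longleftrightarrow> (\<exists>g c. c \<noteq> 0 \<and> x = c *s (\<rho> g *v p))"

definition lin_fun :: "complex^'m::finite \<Rightarrow> complex^'m \<Rightarrow> complex" where
  "lin_fun a x = (\<Sum>i\<in>UNIV. a $ i * x $ i)"

end

theory Submission
  imports Defs "HOL-Computational_Algebra.Polynomial"
begin

text \<open>Restricted to the centre, the representation is a one-parameter group t \<mapsto> P t of
  matrices with polynomial entries. An eigenvalue c of P 1 gives the values c^m of a polynomial
  at the integers m, which forces c = 1. So P 1 is the identity on the hyperplane V' = ker a,
  hence a transvection y \<mapsto> y + a(y) w with a(w) = 0, and polynomiality in t gives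
  P t y = y + t a(y) w. The orbit of p under the centre then lies in the plane spanned by p and w,
  and the only limit point of it in that plane outside the orbit is the line of w. So vh spans
  the line of w, which P t fixes, and P t moves every vector only along that line.\<close>

definition is_poly :: "('a::comm_ring_1 \<Rightarrow> 'a) \<Rightarrow> bool" where
  "is_poly f \<longleftrightarrow> (\<exists>q. f = poly q)"

lemma is_poly_const: "is_poly (\<lambda>t. c)"
  unfolding is_poly_def by (rule exI[of _ "[:c:]"]) auto

lemma is_poly_ident: "is_poly (\<lambda>t. t)"
  unfolding is_poly_def by (rule exI[of _ "[:0, 1:]"]) auto

lemma is_poly_add: "is_poly f \<Longrightarrow> is_poly g \<Longrightarrow> is_poly (\<lambda>t. f t + g t)"
  unfolding is_poly_def by (auto simp flip: poly_add)

lemma is_poly_mult: "is_poly f \<Longrightarrow> is_poly g \<Longrightarrow> is_poly (\<lambda>t. f t * g t)"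
  unfolding is_poly_def by (auto simp flip: poly_mult)

lemma is_poly_sum:
  "finite A \<Longrightarrow> (\<And>i. i \<in> A \<Longrightarrow> is_poly (f i)) \<Longrightarrow> is_poly (\<lambda>t. \<Sum>i\<in>A. f i t)"
  by (induction A rule: finite_induct) (auto intro: is_poly_const is_poly_add)

lemma is_poly_eq_on_Nats:
  fixes f g :: "'a::{idom, ring_char_0} \<Rightarrow> 'a"
  assumes "is_poly f" "is_poly g" "\<And>m. f (of_nat m) = g (of_nat m)"
  shows "f = g"
proof -
  obtain q r where f: "f = poly q" and g: "g = poly r"
    using assms(1,2) unfolding is_poly_def by blast
  have "\<nat> \<subseteq> {x. poly (q - r) x = 0}"
    using assms(3) by (auto simp: f g Nats_def)
  then have "infinite {x. poly (q - r) x = 0}"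
    by (rule infinite_super[OF _ Nats_infinite])
  then have "q - r = 0"
    using poly_roots_finite[of "q - r"] by blast
  then show ?thesis
    by (simp add: f g)
qed

lemma is_poly_geometric_eq_1:
  fixes f :: "'a::{idom, ring_char_0} \<Rightarrow> 'a"
  assumes "is_poly f" and geometric: "\<And>m. f (of_nat m) = \<mu> ^ m * c" and "c \<noteq> 0"
  shows "\<mu> = 1"
proof -
  obtain q where f: "f = poly q"
    using assms(1) unfolding is_poly_def by blast
  have "poly (pcompose q [:1, 1:]) = poly (smult \<mu> q)"
  proof (rule is_poly_eq_on_Nats)
    show "poly (pcompose q [:1, 1:]) (of_nat m) = poly (smult \<mu> q) (of_nat m)" for m
      using geometric[of "Suc m"] geometric[of m] by (simp add: poly_pcompose f add.commute)
  qed (auto simp: is_poly_def)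
  then have shift: "pcompose q [:1, 1:] = smult \<mu> q"
    by (simp only: poly_eq_poly_eq_iff)
  have "q \<noteq> 0"
    using geometric[of 0] \<open>c \<noteq> 0\<close> by (auto simp: f)
  have "lead_coeff q = \<mu> * lead_coeff q"
    using lead_coeff_comp[of "[:1, 1:]" q] lead_coeff_smult[of \<mu> q] by (simp add: shift)
  then show ?thesis
    using \<open>q \<noteq> 0\<close> by simp
qed

lemma poly_fun_is_poly_snd: "poly_fun f \<Longrightarrow> is_poly (\<lambda>t. f (w, t))"
  by (induction rule: poly_fun.induct)
    (auto intro: is_poly_const is_poly_ident is_poly_add is_poly_mult)

lemma lin_fun_add: "lin_fun a (x + y) = lin_fun a x + lin_fun a y"
  by (simp add: lin_fun_def sum.distrib algebra_simps)

lemma lin_fun_diff: "lin_fun a (x - y) = lin_fun a x - lin_fun a y"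
  by (simp add: lin_fun_def sum_subtractf algebra_simps)

lemma lin_fun_scale: "lin_fun a (c *s x) = c * lin_fun a x"
  by (simp add: lin_fun_def sum_distrib_left algebra_simps)

lemma continuous_on_lin_fun: "continuous_on S (lin_fun a)"
  unfolding lin_fun_def by (intro continuous_intros)

lemma identity_on_kernel_imp_transvection:
  fixes M :: "complex^'m::finite^'m"
  assumes kernel: "\<And>x. lin_fun a x = 0 \<Longrightarrow> M *v x = x" and "lin_fun a p \<noteq> 0"
  shows "\<exists>w. \<forall>y. M *v y = y + lin_fun a y *s w"
proof (intro exI allI)
  fix y
  define r where "r = lin_fun a y / lin_fun a p"
  have "lin_fun a (y - r *s p) = 0"
    using \<open>lin_fun a p \<noteq> 0\<close> by (simp add: lin_fun_diff lin_fun_scale r_def)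
  then have "M *v (y - r *s p) = y - r *s p"
    by (rule kernel)
  then have "M *v y = y + r *s (M *v p - p)"
    by (simp add: matrix_vector_mult_diff_distrib vector_scalar_commute algebra_simps)
  then show "M *v y = y + lin_fun a y *s ((1 / lin_fun a p) *s (M *v p - p))"
    by (simp add: r_def)
qed

locale poly_one_param_group =
  fixes P :: "complex \<Rightarrow> complex^'m::finite^'m"
  assumes P_0: "P 0 = mat 1"
    and P_add: "P (s + t) = P s ** P t"
    and is_poly_entry: "is_poly (\<lambda>t. P t $ i $ j)"
begin

lemma P_1_add: "P (1 + s) *v y = P 1 *v (P s *v y)"
  by (simp add: P_add matrix_vector_mul_assoc)

lemma is_poly_apply: "is_poly (\<lambda>t. (P t *v y) $ j)"
  unfolding matrix_vector_mult_def
  by (auto intro!: is_poly_sum is_poly_mult is_poly_const is_poly_entry)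

lemma is_poly_lin_fun_apply: "is_poly (\<lambda>t. lin_fun b (P t *v y))"
  unfolding lin_fun_def
  by (auto intro!: is_poly_sum is_poly_mult is_poly_const is_poly_apply)

lemma eigenvalue_eq_1:
  assumes eigen: "P 1 *v x = c *s x" and "x \<noteq> 0"
  shows "c = 1"
proof -
  have powers: "P (of_nat m) *v x = c ^ m *s x" for m
    by (induction m) (simp_all add: P_0 P_1_add eigen vector_scalar_commute)
  obtain j where "x $ j \<noteq> 0"
    using \<open>x \<noteq> 0\<close> by (auto simp: vec_eq_iff)
  then show ?thesis
    by (intro is_poly_geometric_eq_1[OF is_poly_apply[of x j]]) (auto simp: powers)
qed

lemma left_eigenvalue_eq_1:
  assumes eigen: "\<And>y. lin_fun b (P 1 *v y) = \<mu> * lin_fun b y" and "lin_fun b y \<noteq> 0"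
  shows "\<mu> = 1"
proof -
  have powers: "lin_fun b (P (of_nat m) *v y) = \<mu> ^ m * lin_fun b y" for m
    by (induction m) (simp_all add: P_0 P_1_add eigen)
  show ?thesis
    by (rule is_poly_geometric_eq_1[OF is_poly_lin_fun_apply[of b y] powers \<open>lin_fun b y \<noteq> 0\<close>])
qed

lemma transvection_group:
  assumes P_1: "\<And>y. P 1 *v y = y + lin_fun a y *s w" and "lin_fun a w = 0"
  shows "P t *v y = y + (t * lin_fun a y) *s w"
proof -
  have on_Nats: "P (of_nat m) *v y = y + (of_nat m * lin_fun a y) *s w" for m
  proof (induction m)
    case (Suc m)
    have invariant: "lin_fun a (P (of_nat m) *v y) = lin_fun a y"
      by (simp add: Suc.IH lin_fun_add lin_fun_scale \<open>lin_fun a w = 0\<close>)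
    show ?case
      by (simp add: P_1_add P_1 invariant) (simp add: Suc.IH vec_eq_iff algebra_simps)
  qed (simp add: P_0)
  have "(\<lambda>t. (P t *v y) $ j) = (\<lambda>t. y $ j + t * lin_fun a y * w $ j)" for j
    by (rule is_poly_eq_on_Nats)
      (auto intro!: is_poly_apply is_poly_add is_poly_mult is_poly_const is_poly_ident
        simp: on_Nats)
  then show ?thesis
    by (simp add: vec_eq_iff fun_eq_iff)
qed

lemma fixing_hyperplane_imp_transvection_group:
  assumes fixes_kernel: "\<forall>x. x \<noteq> 0 \<and> lin_fun a x = 0 \<longrightarrow> fixes_point (P 1) x"
    and "lin_fun a p \<noteq> 0"
  obtains w where "lin_fun a w = 0" "\<And>t y. P t *v y = y + (t * lin_fun a y) *s w"
proof -
  have "P 1 *v x = x" if "lin_fun a x = 0" for x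
  proof (cases "x = 0")
    case False
    then obtain c where "P 1 *v x = c *s x"
      using fixes_kernel \<open>lin_fun a x = 0\<close> unfolding fixes_point_def by blast
    with eigenvalue_eq_1 False show ?thesis
      by fastforce
  qed simp
  then obtain w where P_1: "\<And>y. P 1 *v y = y + lin_fun a y *s w"
    using identity_on_kernel_imp_transvection \<open>lin_fun a p \<noteq> 0\<close> by metis
  have "lin_fun a (P 1 *v y) = (1 + lin_fun a w) * lin_fun a y" for y
    by (simp add: P_1 lin_fun_add lin_fun_scale algebra_simps)
  then have "1 + lin_fun a w = 1"
    using left_eigenvalue_eq_1 \<open>lin_fun a p \<noteq> 0\<close> by blast
  then have "lin_fun a w = 0"
    by simp
  with that transvection_group[OF P_1] show thesis
    by blast
qed

end

lemma algebraic_rep_centre_poly_one_param_group: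
  assumes "symplectic_form \<omega>" and rep: "algebraic_rep \<omega> \<rho>"
  shows "poly_one_param_group (\<lambda>t. \<rho> (0, t))"
proof
  have "\<omega> 0 0 = - \<omega> 0 0"
    using assms(1) unfolding symplectic_form_def by blast
  then have "heis_mul \<omega> (0, s) (0, t) = (0, s + t)" for s t
    by (simp add: heis_mul_def)
  then show "\<rho> (0, s + t) = \<rho> (0, s) ** \<rho> (0, t)" for s t
    using rep unfolding algebraic_rep_def by metis
  show "\<rho> (0, 0) = mat 1" "is_poly (\<lambda>t. \<rho> (0, t) $ i $ j)" for i j
    using rep unfolding algebraic_rep_def by (auto intro: poly_fun_is_poly_snd)
qed

lemma closed_line:
  fixes w :: "'a::real_normed_field^'m::finite"
  shows "closed {d *s w | d. True}"
proof (cases "w = 0")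
  case True
  then have "{d *s w | d. True} = {0}"
    by auto
  then show ?thesis
    by simp
next
  case False
  then obtain j where "w $ j \<noteq> 0"
    by (auto simp: vec_eq_iff)
  have "{d *s w | d. True} = {x. \<forall>i. x $ i * w $ j = x $ j * w $ i}"
  proof (intro set_eqI iffI)
    fix x
    assume "x \<in> {x. \<forall>i. x $ i * w $ j = x $ j * w $ i}"
    then have "x = (x $ j / w $ j) *s w"
      using \<open>w $ j \<noteq> 0\<close> by (simp add: vec_eq_iff field_simps)
    then show "x \<in> {d *s w | d. True}"
      by blast
  qed (auto simp: mult_ac)
  moreover have "closed {x. \<forall>i. x $ i * w $ j = x $ j * w $ i}"
    by (intro closed_Collect_all closed_Collect_eq continuous_intros)
  ultimately show ?thesis
    by simp
qed

lemma transvection_orbit_closure_boundary: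
  fixes P :: "complex \<Rightarrow> complex^'m::finite^'m"
  assumes P: "\<And>t y. P t *v y = y + (t * lin_fun a y) *s w" and "lin_fun a w = 0"
    and "lin_fun a p \<noteq> 0"
    and limit: "vh \<in> closure {c *s (P s *v p) | c s. c \<noteq> 0}"
    and not_in_orbit: "\<not> (\<exists>c s. c \<noteq> 0 \<and> vh = c *s (P s *v p))"
  obtains d where "vh = d *s w"
proof -
  define \<alpha> where "\<alpha> = lin_fun a p"
  have "\<alpha> \<noteq> 0"
    using \<open>lin_fun a p \<noteq> 0\<close> by (simp add: \<alpha>_def)
  define proj where "proj x = x - (lin_fun a x / \<alpha>) *s p" for x
  have "proj ` {c *s (P s *v p) | c s. c \<noteq> 0} \<subseteq> {d *s w | d. True}"
  proof (rule image_subsetI)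
    fix x
    assume "x \<in> {c *s (P s *v p) | c s. c \<noteq> 0}"
    then obtain c s where x: "x = c *s (P s *v p)"
      by blast
    have "lin_fun a x = c * \<alpha>"
      by (simp add: x P lin_fun_add lin_fun_scale \<open>lin_fun a w = 0\<close> \<alpha>_def)
    then have "proj x = (c * s * \<alpha>) *s w"
      using \<open>\<alpha> \<noteq> 0\<close> by (simp add: proj_def) (simp add: x P \<alpha>_def vec_eq_iff algebra_simps)
    then show "proj x \<in> {d *s w | d. True}"
      by blast
  qed
  moreover have "continuous_on S proj" for S
    unfolding proj_def vector_scalar_mult_def
    using \<open>\<alpha> \<noteq> 0\<close> by (intro continuous_intros continuous_on_lin_fun) auto
  ultimately have "proj vh \<in> {d *s w | d. True}"
    using image_closure_subset[OF _ closed_line] limit by blast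
  then obtain d where d: "vh = d *s w + (lin_fun a vh / \<alpha>) *s p"
    by (auto simp: proj_def diff_eq_eq)
  have "lin_fun a vh = 0"
  proof (rule ccontr)
    define c where "c = lin_fun a vh / \<alpha>"
    assume "lin_fun a vh \<noteq> 0"
    then have "c \<noteq> 0"
      using \<open>\<alpha> \<noteq> 0\<close> by (simp add: c_def)
    then have "vh = c *s (P (d / (c * \<alpha>)) *v p)"
      using \<open>\<alpha> \<noteq> 0\<close> d by (simp add: P c_def \<alpha>_def vec_eq_iff field_simps)
    with \<open>c \<noteq> 0\<close> not_in_orbit show False
      by blast
  qed
  with d show thesis
    by (intro that[of d]) simp
qed

theorem lemma2p6:
  fixes n :: nat
    and \<omega> :: "complex^'k::finite \<Rightarrow> complex^'k \<Rightarrow> complex"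
    and \<rho> :: "(complex^'k) \<times> complex \<Rightarrow> complex^'m::finite^'m"
    and a :: "complex^'m"
    and p vh :: "complex^'m"
  assumes "n \<ge> 1"
    and "CARD('k) = 2 * n"
    and "CARD('m) = 2 * n + 2"
    and "symplectic_form \<omega>"
    and "algebraic_rep \<omega> \<rho>"
    and "effective_proj \<rho>"
    and "a \<noteq> 0"
    \<comment> \<open>the open orbit is exactly the complement of the hyperplane P V', V' = ker a\<close>
    and "\<forall>x y. lin_fun a x \<noteq> 0 \<longrightarrow> (proj_orbit \<rho> x y \<longleftrightarrow> lin_fun a y \<noteq> 0)"
    \<comment> \<open>T fixes every point of the boundary hyperplane\<close>
    and "\<forall>x. x \<noteq> 0 \<and> lin_fun a x = 0 \<longrightarrow> fixes_point (\<rho> (0, 1)) x"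
    \<comment> \<open>p lies in the open orbit; [vh] is the point of closure(I.p) minus I.p\<close>
    and "lin_fun a p \<noteq> 0"
    and "vh \<noteq> 0"
    and "vh \<in> closure {c *s (\<rho> (0, s) *v p) | c s. c \<noteq> 0}"
    and "\<not> (\<exists>c s. c \<noteq> 0 \<and> vh = c *s (\<rho> (0, s) *v p))"
  shows "\<forall>s. (\<exists>c. \<rho> (0, s) *v vh = c *s vh) \<and>
             (\<forall>x. x \<notin> {d *s vh | d. True} \<longrightarrow>
                 (\<exists>c. \<rho> (0, s) *v x - c *s x \<in> {d *s vh | d. True}))"
proof -
  interpret poly_one_param_group "\<lambda>t. \<rho> (0, t)"
    using algebraic_rep_centre_poly_one_param_group assms(4,5) .
  obtain w where "lin_fun a w = 0" and P: "\<And>t y. \<rho> (0, t) *v y = y + (t * lin_fun a y) *s w"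
    using fixing_hyperplane_imp_transvection_group assms(9,10) by blast
  obtain d where vh: "vh = d *s w"
    using transvection_orbit_closure_boundary[OF P] \<open>lin_fun a w = 0\<close> assms(10,12,13) by blast
  with \<open>vh \<noteq> 0\<close> have "d \<noteq> 0"
    by auto
  have "\<rho> (0, s) *v vh = 1 *s vh" for s
    by (simp add: P vh lin_fun_scale \<open>lin_fun a w = 0\<close>)
  moreover have "\<rho> (0, s) *v x - 1 *s x = (s * lin_fun a x / d) *s vh" for s x
    using \<open>d \<noteq> 0\<close> by (simp add: P vh)
  ultimately show ?thesis
    by blast
qed

end
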